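(* Let $P^\ast$ be an $n\times k$ minimal matrix representation of a $0/1$-polytope with $k$ vertices. Then for each $j\in\{1,\dots,k-1\}$, the submatrix $P_j^\ast$ of $P^\ast$ consisting of its $j$ leftmost columns is a minimal matrix representation of a $0/1$-polytope with $j$ vertices.
   Context: For $x\in\{0,1\}^n$ its column number is $v_n^\top x$ with $v_n^\top=(2^0,2^1,\dots,2^{n-1})$. For an $n\times m$ $0/1$-matrix $P$ with pairwise distinct columns, $\nu(P)$ is the vector of its column numbers sorted increasingly. $P$ is a minimal matrix representation (of the $0/1$-polytope whose vertices are its columns) if its column numbers $v_n^\top P$ are strictly increasing from left to right and $\nu(P)\preceq\nu(Q)$ in lexicographic order for every matrix $Q$ obtained from $P$ by complementing (exchanging $0\leftrightarrow1$) the entries of some subset of its rows and then permuting its rows. *)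

theory Defs
  imports Main "HOL-Combinatorics.Permutations"
begin

text \<open>An n x m 0/1-matrix is represented by a function P :: nat => nat => bool,
  where P i j is the entry in row i < n and column j < m (True = 1, False = 0).
  Entries outside the index range are irrelevant.\<close>

definition colnum :: "nat \<Rightarrow> (nat \<Rightarrow> nat \<Rightarrow> bool) \<Rightarrow> nat \<Rightarrow> nat" where
  "colnum n P j = (\<Sum>i<n. of_bool (P i j) * 2 ^ i)"

definition distinct_cols :: "nat \<Rightarrow> nat \<Rightarrow> (nat \<Rightarrow> nat \<Rightarrow> bool) \<Rightarrow> bool" where
  "distinct_cols n m P \<longleftrightarrow> (\<forall>j<m. \<forall>j'<m. j \<noteq> j' \<longrightarrow> (\<exists>i<n. P i j \<noteq> P i j'))"

definition nu :: "nat \<Rightarrow> nat \<Rightarrow> (nat \<Rightarrow> nat \<Rightarrow> bool) \<Rightarrow> nat list" where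
  "nu n m P = sort (map (colnum n P) [0..<m])"

definition flip_perm :: "nat set \<Rightarrow> (nat \<Rightarrow> nat) \<Rightarrow> (nat \<Rightarrow> nat \<Rightarrow> bool) \<Rightarrow> (nat \<Rightarrow> nat \<Rightarrow> bool)" where
  "flip_perm S \<sigma> P = (\<lambda>i j. if \<sigma> i \<in> S then \<not> P (\<sigma> i) j else P (\<sigma> i) j)"

definition minimal_matrix_rep :: "nat \<Rightarrow> nat \<Rightarrow> (nat \<Rightarrow> nat \<Rightarrow> bool) \<Rightarrow> bool" where
  "minimal_matrix_rep n m P \<longleftrightarrow>
     distinct_cols n m P \<and>
     (\<forall>j j'. j < j' \<and> j' < m \<longrightarrow> colnum n P j < colnum n P j') \<and>
     (\<forall>S \<sigma>. S \<subseteq> {..<n} \<and> \<sigma> permutes {..<n} \<longrightarrow>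
        lexordp_eq (nu n m P) (nu n m (flip_perm S \<sigma> P)))"

end

theory Submission
  imports Defs
begin

text \<open>Since the columns of a minimal representation are increasing, the column-number
  list of its first \<open>j\<close> columns is the length-\<open>j\<close> prefix of \<open>\<nu>(P)\<close>. For any
  row-complemented and row-permuted \<open>Q\<close>, the \<open>i\<close>-th smallest column number among the
  first \<open>j\<close> columns of \<open>Q\<close> is at least the \<open>i\<close>-th smallest among all \<open>k\<close> columns. Hence
  \<open>\<nu>(P\<^sub>j) = take j \<nu>(P) \<preceq> take j \<nu>(Q) \<preceq> \<nu>(Q\<^sub>j)\<close>, the first step because truncation
  preserves the lexicographic order and the second because the comparison is entrywise.\<close>

lemma lexordp_eq_take:
  fixes xs ys :: "'a::linorder list"
  assumes "lexordp_eq xs ys"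
  shows "lexordp_eq (take j xs) (take j ys)"
  using assms
proof (induction arbitrary: j rule: lexordp_eq.induct)
  case (Cons_eq x y xs ys)
  then show ?case by (cases j) auto
qed (auto simp: take_Cons')

lemma lexordp_eq_if_nth_le:
  fixes xs ys :: "'a::linorder list"
  assumes "length xs \<le> length ys" and "\<And>i. i < length xs \<Longrightarrow> xs ! i \<le> ys ! i"
  shows "lexordp_eq xs ys"
  using assms
proof (induction xs arbitrary: ys)
  case (Cons x xs)
  then obtain y ys' where ys: "ys = y # ys'" by (cases ys) auto
  have "x \<le> y" using Cons.prems(2)[of 0] ys by simp
  moreover have "lexordp_eq xs ys'"
  proof (rule Cons.IH)
    show "length xs \<le> length ys'" using Cons.prems(1) ys by simp
    show "xs ! i \<le> ys' ! i" if "i < length xs" for i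
      using Cons.prems(2)[of "Suc i"] that ys by simp
  qed
  ultimately show ?case using ys by auto
qed simp

lemma sorted_nth_le_iff_less_length_filter:
  fixes s :: "'a::linorder list"
  assumes "sorted s" and "i < length s"
  shows "s ! i \<le> v \<longleftrightarrow> i < length (filter (\<lambda>x. x \<le> v) s)"
proof -
  let ?A = "{l. l < length s \<and> s ! l \<le> v}"
  have count: "length (filter (\<lambda>x. x \<le> v) s) = card ?A"
    by (simp add: length_filter_conv_card)
  show ?thesis
  proof
    assume "s ! i \<le> v"
    then have "{..i} \<subseteq> ?A"
      using assms sorted_nth_mono by fastforce
    then have "card {..i} \<le> card ?A"
      by (intro card_mono) auto
    then show "i < length (filter (\<lambda>x. x \<le> v) s)" using count by simp
  next
    assume less: "i < length (filter (\<lambda>x. x \<le> v) s)"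
    show "s ! i \<le> v"
    proof (rule ccontr)
      assume "\<not> s ! i \<le> v"
      have "?A \<subseteq> {..<i}"
      proof
        fix l assume l: "l \<in> ?A"
        show "l \<in> {..<i}"
        proof (rule ccontr)
          assume "l \<notin> {..<i}"
          then have "s ! i \<le> s ! l" using assms l by (simp add: sorted_nth_mono)
          with l \<open>\<not> s ! i \<le> v\<close> show False by (auto intro: order_trans)
        qed
      qed
      then have "card ?A \<le> i"
        using card_mono[of "{..<i}" ?A] by simp
      with less count show False by simp
    qed
  qed
qed

lemma nth_sort_append_le:
  fixes xs ys :: "'a::linorder list"
  assumes "i < length xs"
  shows "sort (xs @ ys) ! i \<le> sort xs ! i"
proof -
  let ?v = "sort xs ! i"
  have "i < length (filter (\<lambda>x. x \<le> ?v) xs)"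
    using sorted_nth_le_iff_less_length_filter[of "sort xs" i ?v] assms
    by (simp add: filter_sort)
  also have "\<dots> \<le> length (filter (\<lambda>x. x \<le> ?v) (xs @ ys))"
    by simp
  finally show ?thesis
    using sorted_nth_le_iff_less_length_filter[of "sort (xs @ ys)" i ?v] assms
    by (simp add: filter_sort)
qed

lemma length_nu [simp]: "length (nu n m Q) = m"
  by (simp add: nu_def)

lemma nth_nu_le_nth_nu_prefix:
  assumes "j \<le> k" and "i < j"
  shows "nu n k Q ! i \<le> nu n j Q ! i"
proof -
  have "[0..<k] = [0..<j] @ [j..<k]"
    using assms(1) upt_add_eq_append[of 0 j "k - j"] by simp
  then show ?thesis
    using nth_sort_append_le[of i "map (colnum n Q) [0..<j]"] assms(2)
    by (simp add: nu_def)
qed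

lemma nu_eq_map_colnum:
  assumes "\<forall>j j'. j < j' \<and> j' < m \<longrightarrow> colnum n P j < colnum n P j'"
  shows "nu n m P = map (colnum n P) [0..<m]"
proof -
  have "sorted (map (colnum n P) [0..<m])"
    using assms by (auto simp: sorted_iff_nth_mono_less intro: less_imp_le)
  then show ?thesis unfolding nu_def by (simp add: sorted_sort_id)
qed

theorem lemma4p10:
  fixes n k j :: nat and P :: "nat \<Rightarrow> nat \<Rightarrow> bool"
  assumes "minimal_matrix_rep n k P"
    and "1 \<le> j" and "j \<le> k - 1"
  shows "minimal_matrix_rep n j P"
proof -
  have "j \<le> k" using assms(3) by simp
  have distinct: "distinct_cols n k P"
    and incr: "\<forall>j j'. j < j' \<and> j' < k \<longrightarrow> colnum n P j < colnum n P j'"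
    and minimal: "\<And>S \<sigma>. S \<subseteq> {..<n} \<Longrightarrow> \<sigma> permutes {..<n} \<Longrightarrow>
      lexordp_eq (nu n k P) (nu n k (flip_perm S \<sigma> P))"
    using assms(1) unfolding minimal_matrix_rep_def by auto
  have incr_j: "\<forall>i i'. i < i' \<and> i' < j \<longrightarrow> colnum n P i < colnum n P i'"
    using incr \<open>j \<le> k\<close> by auto
  have prefix: "nu n j P = take j (nu n k P)"
    using nu_eq_map_colnum[OF incr] nu_eq_map_colnum[OF incr_j] \<open>j \<le> k\<close> by (simp add: take_map)
  have "lexordp_eq (nu n j P) (nu n j (flip_perm S \<sigma> P))"
    if "S \<subseteq> {..<n}" and "\<sigma> permutes {..<n}" for S \<sigma>
  proof -
    let ?Q = "flip_perm S \<sigma> P"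
    have "lexordp_eq (nu n j P) (take j (nu n k ?Q))"
      unfolding prefix by (rule lexordp_eq_take[OF minimal[OF that]])
    moreover have "lexordp_eq (take j (nu n k ?Q)) (nu n j ?Q)"
      using nth_nu_le_nth_nu_prefix[OF \<open>j \<le> k\<close>] by (intro lexordp_eq_if_nth_le) auto
    ultimately show ?thesis by (rule lexordp_eq_trans)
  qed
  moreover have "distinct_cols n j P"
    using distinct \<open>j \<le> k\<close> unfolding distinct_cols_def by auto
  ultimately show ?thesis
    unfolding minimal_matrix_rep_def using incr_j by blast
qed

end
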